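(* Let $n\in\mathbb N$ and $0<\alpha<\beta$. Then there exists $c=c(n,\alpha,\beta)>0$ such that $|P_{n,j,m}(\lambda)|\le c\beta^m$ whenever $m\in\mathbb Z_+$, $1\le j\le n$ and $\lambda\in\mathbb C^n$ satisfies $\max_{1\le r\le n}|\lambda_r|\le\alpha$.
   Context: For $\lambda=(\lambda_1,\dots,\lambda_n)\in\mathbb C^n$, $M_n(\lambda)$ is the Vandermonde matrix $(\lambda_j^{r-1})_{j,r=1}^n$. For $1\le j\le n$ and $m\in\mathbb Z_+$, $M_{n,j,m}(\lambda)$ is the matrix obtained from $M_n(\lambda)$ by replacing its $j$-th column $(\lambda_1^{j-1},\dots,\lambda_n^{j-1})^T$ by $(\lambda_1^m,\dots,\lambda_n^m)^T$. The polynomial $\det M_n(\lambda)=\prod_{1\le j<r\le n}(\lambda_r-\lambda_j)$ divides $\det M_{n,j,m}(\lambda)$ in $\mathbb C[\lambda_1,\dots,\lambda_n]$, and $P_{n,j,m}\in\mathbb C[\lambda_1,\dots,\lambda_n]$ denotes the quotient $\det M_{n,j,m}(\lambda)/\det M_n(\lambda)$. $\mathbb Z_+=\{0,1,2,\dots\}$. *)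

theory Defs
  imports Complex_Main "Jordan_Normal_Form.Determinant"
begin

text \<open>Points lambda of C^n are represented as functions nat => complex; only the
  coordinates 0..n-1 (i.e. lambda_1..lambda_n of the paper, shifted by one) matter.\<close>

inductive poly_fun :: "nat \<Rightarrow> ((nat \<Rightarrow> complex) \<Rightarrow> complex) \<Rightarrow> bool" for n where
  const: "poly_fun n (\<lambda>_. c)"
| var: "i < n \<Longrightarrow> poly_fun n (\<lambda>x. x i)"
| add: "poly_fun n f \<Longrightarrow> poly_fun n g \<Longrightarrow> poly_fun n (\<lambda>x. f x + g x)"
| mult: "poly_fun n f \<Longrightarrow> poly_fun n g \<Longrightarrow> poly_fun n (\<lambda>x. f x * g x)"

definition vandermonde :: "nat \<Rightarrow> (nat \<Rightarrow> complex) \<Rightarrow> complex mat" where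
  "vandermonde n x = mat n n (\<lambda>(r, c). x r ^ c)"

text \<open>M_{n,j,m}(lambda): the j-th column (1-based j) replaced by (lambda_r ^ m)_r.\<close>
definition vandermonde_repl :: "nat \<Rightarrow> nat \<Rightarrow> nat \<Rightarrow> (nat \<Rightarrow> complex) \<Rightarrow> complex mat" where
  "vandermonde_repl n j m x = mat n n (\<lambda>(r, c). if c = j - 1 then x r ^ m else x r ^ c)"

text \<open>P_{n,j,m}: the polynomial quotient det M_{n,j,m} / det M_n, as a polynomial function.\<close>
definition P :: "nat \<Rightarrow> nat \<Rightarrow> nat \<Rightarrow> (nat \<Rightarrow> complex) \<Rightarrow> complex" where
  "P n j m = (THE f. poly_fun n f \<and>
      (\<forall>x. f x * det (vandermonde n x) = det (vandermonde_repl n j m x)))"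

end

theory Submission
  imports Defs
begin

text \<open>
  The interpolation polynomial of \<open>y\<^sup>m\<close> at the nodes \<open>x\<^sub>0, \<dots>, x\<^sub>n\<^sub>-\<^sub>1\<close> has, in
  Newton's form, the divided differences of \<open>y\<^sup>m\<close> as coefficients; these are the complete
  homogeneous symmetric polynomials \<open>h\<^sub>m\<^sub>-\<^sub>i(x\<^sub>0, \<dots>, x\<^sub>i)\<close>. Its coefficient vector
  \<open>a\<close> solves \<open>M\<^sub>n(x) a = (x\<^sub>r\<^sup>m)\<^sub>r\<close>, so by Cramer's rule \<open>det M\<^sub>n\<^sub>,\<^sub>j\<^sub>,\<^sub>m = a\<^sub>j\<^sub>-\<^sub>1 det M\<^sub>n\<close>,
  and \<open>P\<^sub>n\<^sub>,\<^sub>j\<^sub>,\<^sub>m = a\<^sub>j\<^sub>-\<^sub>1\<close> because a polynomial is determined by its values on the dense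
  set where \<open>det M\<^sub>n \<noteq> 0\<close>. Finally \<open>|h\<^sub>d(x\<^sub>0, \<dots>, x\<^sub>i)| \<le> (d + 1)\<^sup>i\<^sup>+\<^sup>1 \<alpha>\<^sup>d\<close> for
  \<open>|x\<^sub>r| \<le> \<alpha>\<close>, and the polynomial factor \<open>(m + 1)\<^sup>n\<close> is absorbed by \<open>(\<beta> / \<alpha>)\<^sup>m\<close>.
\<close>

text \<open>\<open>complete_sym k d x\<close> is \<open>h\<^sub>d(x\<^sub>0, \<dots>, x\<^sub>k\<^sub>-\<^sub>1)\<close>, computed by splitting off the monomials
  that contain \<open>x\<^sub>k\<^sub>-\<^sub>1\<close>.\<close>

fun complete_sym :: "nat \<Rightarrow> nat \<Rightarrow> (nat \<Rightarrow> complex) \<Rightarrow> complex" where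
  "complete_sym 0 d x = (if d = 0 then 1 else 0)"
| "complete_sym (Suc k) 0 x = 1"
| "complete_sym (Suc k) (Suc d) x = complete_sym k (Suc d) x + x k * complete_sym (Suc k) d x"

lemma complete_sym_0_right [simp]: "complete_sym k 0 x = 1"
  by (cases k) auto

lemma complete_sym_Suc_0 [simp]: "complete_sym (Suc 0) d x = x 0 ^ d"
  by (induction d) auto

lemma complete_sym_fun_upd: "k \<le> i \<Longrightarrow> complete_sym k d (x(i := y)) = complete_sym k d x"
  by (induction k d x rule: complete_sym.induct) auto

text \<open>The recursion of divided differences.\<close>

lemma complete_sym_exchange_node:
  "complete_sym (Suc k) (Suc d) (x(k := y)) - complete_sym (Suc k) (Suc d) x
     = (y - x k) * complete_sym (Suc (Suc k)) d (x(Suc k := y))"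
proof (induction d)
  case 0
  have "complete_sym k (Suc 0) (x(k := y)) = complete_sym k (Suc 0) x"
    by (rule complete_sym_fun_upd) simp
  then show ?case
    by (subst complete_sym.simps(3)) simp
next
  case (Suc d)
  have "complete_sym (Suc k) (Suc (Suc d)) (x(k := y)) - complete_sym (Suc k) (Suc (Suc d)) x
      = y * (complete_sym (Suc k) (Suc d) (x(k := y)) - complete_sym (Suc k) (Suc d) x)
        + (y - x k) * complete_sym (Suc k) (Suc d) x"
    by (simp add: complete_sym_fun_upd algebra_simps)
  also have "\<dots> = (y - x k) * complete_sym (Suc (Suc k)) (Suc d) (x(Suc k := y))"
    unfolding Suc by (simp add: complete_sym_fun_upd algebra_simps)
  finally show ?case .
qed

fun node_poly :: "nat \<Rightarrow> (nat \<Rightarrow> complex) \<Rightarrow> complex poly" where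
  "node_poly 0 x = 1"
| "node_poly (Suc k) x = [:- x k, 1:] * node_poly k x"

lemma poly_node_poly: "poly (node_poly k x) y = (\<Prod>r<k. y - x r)"
  by (induction k) (auto simp: algebra_simps)

lemma degree_node_poly: "degree (node_poly k x) = k"
proof -
  have "node_poly k x \<noteq> 0 \<and> degree (node_poly k x) = k"
    by (induction k) (simp_all add: degree_mult_eq del: mult_pCons_left)
  then show ?thesis ..
qed

lemma coeff_node_poly_Suc:
  "coeff (node_poly (Suc k) x) c
     = - x k * coeff (node_poly k x) c + (case c of 0 \<Rightarrow> 0 | Suc c' \<Rightarrow> coeff (node_poly k x) c')"
  by (simp add: coeff_pCons split: nat.split)

text \<open>For \<open>i > m\<close> the divided difference of \<open>y\<^sup>m\<close> is \<open>0\<close>, whereas the truncated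
  subtraction would give \<open>h\<^sub>0 = 1\<close>; hence the case distinction.\<close>

definition newton_interp :: "nat \<Rightarrow> nat \<Rightarrow> (nat \<Rightarrow> complex) \<Rightarrow> complex poly" where
  "newton_interp n m x =
     (\<Sum>i<n. smult (if i \<le> m then complete_sym (Suc i) (m - i) x else 0) (node_poly i x))"

lemma poly_newton_interp:
  "poly (newton_interp k m x) y
     = y ^ m - (if k \<le> m then complete_sym (Suc k) (m - k) (x(k := y)) else 0) * poly (node_poly k x) y"
proof (induction k)
  case 0
  then show ?case by (simp add: newton_interp_def)
next
  case (Suc k)
  have interp_Suc: "poly (newton_interp (Suc k) m x) y = poly (newton_interp k m x) y
      + (if k \<le> m then complete_sym (Suc k) (m - k) x else 0) * poly (node_poly k x) y"
    by (simp add: newton_interp_def)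
  have node_Suc: "poly (node_poly (Suc k) x) y = (y - x k) * poly (node_poly k x) y"
    by (simp add: algebra_simps)
  consider "k < m" | "m \<le> k" by linarith
  then show ?case
  proof cases
    case 1
    then obtain d where d: "m - k = Suc d" "m - Suc k = d"
      by (metis Suc_diff_Suc)
    have exchange: "complete_sym (Suc k) (m - k) x = complete_sym (Suc k) (m - k) (x(k := y))
        - (y - x k) * complete_sym (Suc (Suc k)) (m - Suc k) (x(Suc k := y))"
      using complete_sym_exchange_node[of k d x y] unfolding d by (simp add: algebra_simps)
    show ?thesis
      using 1 unfolding interp_Suc node_Suc Suc exchange by (simp add: algebra_simps)
  next
    case 2
    then show ?thesis
      unfolding interp_Suc node_Suc Suc by (cases "k = m") auto
  qed
qed

lemma poly_newton_interp_node: "s < n \<Longrightarrow> poly (newton_interp n m x) (x s) = x s ^ m"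
  by (auto simp: poly_newton_interp poly_node_poly)

lemma coeff_newton_interp_eq_0: "n \<le> c \<Longrightarrow> coeff (newton_interp n m x) c = 0"
  unfolding newton_interp_def coeff_sum
  by (intro sum.neutral) (auto intro!: coeff_eq_0 simp: degree_node_poly)

lemma poly_eq_sum_lessThan:
  fixes p :: "'a::comm_semiring_1 poly"
  assumes "\<And>c. n \<le> c \<Longrightarrow> coeff p c = 0"
  shows "poly p y = (\<Sum>c<n. coeff p c * y ^ c)"
proof -
  have "poly p y = (\<Sum>c\<le>degree p. coeff p c * y ^ c)"
    by (rule poly_altdef)
  also have "\<dots> = (\<Sum>c<max n (Suc (degree p)). coeff p c * y ^ c)"
    by (intro sum.mono_neutral_left) (auto simp: coeff_eq_0)
  also have "\<dots> = (\<Sum>c<n. coeff p c * y ^ c)"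
    using assms by (intro sum.mono_neutral_right) auto
  finally show ?thesis .
qed

lemma vandermonde_mult_newton_interp_coeffs:
  assumes "r < n"
  shows "(vandermonde n x *\<^sub>v vec n (coeff (newton_interp n m x))) $ r = x r ^ m"
proof -
  have "(vandermonde n x *\<^sub>v vec n (coeff (newton_interp n m x))) $ r
      = (\<Sum>c<n. coeff (newton_interp n m x) c * x r ^ c)"
    using assms by (simp add: vandermonde_def mult_mat_vec_def scalar_prod_def lessThan_atLeast0 mult.commute)
  also have "\<dots> = poly (newton_interp n m x) (x r)"
    by (rule poly_eq_sum_lessThan[symmetric]) (rule coeff_newton_interp_eq_0)
  finally show ?thesis
    using assms by (simp add: poly_newton_interp_node)
qed

lemma det_vandermonde_repl:
  assumes "1 \<le> j" "j \<le> n"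
  shows "det (vandermonde_repl n j m x) = coeff (newton_interp n m x) (j - 1) * det (vandermonde n x)"
proof -
  define a where "a = vec n (coeff (newton_interp n m x))"
  define V where "V = vandermonde n x"
  have V: "V \<in> carrier_mat n n"
    by (simp add: V_def vandermonde_def)
  have "vandermonde_repl n j m x = replace_col V (V *\<^sub>v a) (j - 1)"
    using V vandermonde_mult_newton_interp_coeffs[of _ n x m]
    by (intro eq_matI) (auto simp: vandermonde_repl_def replace_col_def V_def a_def vandermonde_def
        simp del: index_mult_mat_vec)
  moreover have "det (replace_col V (V *\<^sub>v a) (j - 1)) = a $ (j - 1) * det V"
    using assms by (intro cramer_lemma_mat[OF V]) (auto simp: a_def)
  ultimately show ?thesis
    using assms by (simp add: a_def V_def)
qed

lemma poly_fun_diff: "poly_fun n f \<Longrightarrow> poly_fun n g \<Longrightarrow> poly_fun n (\<lambda>x. f x - g x)"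
  using poly_fun.add[OF _ poly_fun.mult[OF poly_fun.const[of n "-1"]], of f g] by simp

lemma poly_fun_sum:
  "finite I \<Longrightarrow> (\<And>i. i \<in> I \<Longrightarrow> poly_fun n (f i)) \<Longrightarrow> poly_fun n (\<lambda>x. \<Sum>i\<in>I. f i x)"
  by (induction I rule: finite_induct) (auto intro: poly_fun.intros)

lemma poly_fun_complete_sym: "k \<le> n \<Longrightarrow> poly_fun n (complete_sym k d)"
proof (induction k arbitrary: d)
  case 0
  then show ?case
    using poly_fun.const[of n "if d = 0 then 1 else 0"] by simp
next
  case (Suc k)
  then have IH: "poly_fun n (complete_sym k d')" for d'
    by simp
  show ?case
  proof (induction d)
    case 0
    then show ?case
      using poly_fun.const[of n 1] by simp
  next
    case (Suc d)
    then have "poly_fun n (\<lambda>x. complete_sym k (Suc d) x + x k * complete_sym (Suc k) d x)"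
      using IH \<open>Suc k \<le> n\<close> by (intro poly_fun.add poly_fun.mult poly_fun.var) auto
    then show ?case
      by simp
  qed
qed

lemma poly_fun_coeff_node_poly: "k \<le> n \<Longrightarrow> poly_fun n (\<lambda>x. coeff (node_poly k x) c)"
proof (induction k arbitrary: c)
  case 0
  then show ?case
    by (auto intro: poly_fun.const)
next
  case (Suc k)
  have "poly_fun n (\<lambda>x. case c of 0 \<Rightarrow> 0 | Suc c' \<Rightarrow> coeff (node_poly k x) c')"
    using Suc by (cases c) (auto intro: poly_fun.const)
  then have "poly_fun n (\<lambda>x. -1 * x k * coeff (node_poly k x) c
      + (case c of 0 \<Rightarrow> 0 | Suc c' \<Rightarrow> coeff (node_poly k x) c'))"
    using Suc by (intro poly_fun.add poly_fun.mult poly_fun.var poly_fun.const) auto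
  then show ?case
    unfolding coeff_node_poly_Suc by simp
qed

lemma poly_fun_coeff_newton_interp: "poly_fun n (\<lambda>x. coeff (newton_interp n m x) c)"
proof -
  have "poly_fun n (\<lambda>x. complete_sym (Suc i) (m - i) x)" if "i < n" for i
    using that by (intro poly_fun_complete_sym) simp
  then have "poly_fun n (\<lambda>x. (if i \<le> m then complete_sym (Suc i) (m - i) x else 0)
      * coeff (node_poly i x) c)" if "i < n" for i
    using that poly_fun.const[of n 0]
    by (cases "i \<le> m") (auto intro!: poly_fun.mult poly_fun_coeff_node_poly)
  then show ?thesis
    unfolding newton_interp_def coeff_sum coeff_smult by (intro poly_fun_sum) auto
qed

lemma det_vandermonde_nonzero:
  assumes "inj_on x {..<n}"
  shows "det (vandermonde n x) \<noteq> 0"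
proof
  assume "det (vandermonde n x) = 0"
  then obtain v where v: "v \<in> carrier_vec n" "v \<noteq> 0\<^sub>v n" "vandermonde n x *\<^sub>v v = 0\<^sub>v n"
    using det_0_iff_vec_prod_zero_field[of "vandermonde n x" n] by (auto simp: vandermonde_def)
  define p where "p = (\<Sum>c<n. monom (v $ c) c)"
  have coeff_p: "coeff p c = (if c < n then v $ c else 0)" for c
    unfolding p_def coeff_sum by (auto simp: coeff_monom)
  have "p \<noteq> 0"
  proof
    assume "p = 0"
    then have "v $ i = 0" if "i < n" for i
      using coeff_p[of i] that by simp
    then have "v = 0\<^sub>v n"
      using v(1) by (intro eq_vecI) auto
    with v(2) show False ..
  qed
  then have "n \<noteq> 0"
    by (intro notI) (simp add: p_def)
  have "poly p (x r) = 0" if "r < n" for r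
  proof -
    have "poly p (x r) = (\<Sum>c<n. v $ c * x r ^ c)"
      unfolding p_def poly_sum by (simp add: poly_monom)
    also have "\<dots> = (vandermonde n x *\<^sub>v v) $ r"
      using v(1) that
      by (simp add: vandermonde_def mult_mat_vec_def scalar_prod_def lessThan_atLeast0 mult.commute)
    finally show ?thesis
      using v(3) that by simp
  qed
  then have "x ` {..<n} \<subseteq> {y. poly p y = 0}"
    by auto
  then have "card (x ` {..<n}) \<le> card {y. poly p y = 0}"
    by (rule card_mono[OF poly_roots_finite[OF \<open>p \<noteq> 0\<close>]])
  also have "\<dots> \<le> degree p"
    by (rule card_poly_roots_bound[OF \<open>p \<noteq> 0\<close>])
  also have "\<dots> \<le> n - 1"
    by (rule degree_le) (auto simp: coeff_p)
  finally show False
    using card_image[OF assms] \<open>n \<noteq> 0\<close> by simp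
qed

lemma isCont_poly_fun_line: "poly_fun n f \<Longrightarrow> isCont (\<lambda>t::complex. f (\<lambda>r. x r + t * v r)) t"
  by (induction rule: poly_fun.induct) (simp_all add: continuous_intros)

text \<open>Identity theorem: along the line \<open>t \<mapsto> x + t (0, 1, \<dots>, n - 1)\<close> the coordinates are
  distinct for all but finitely many \<open>t\<close>, so \<open>f - g\<close> vanishes near \<open>t = 0\<close> and, being
  continuous, also at \<open>t = 0\<close>.\<close>

lemma poly_fun_eq_if_eq_on_injective:
  assumes "poly_fun n f" "poly_fun n g" and "\<And>z. inj_on z {..<n} \<Longrightarrow> f z = g z"
  shows "f = g"
proof
  fix x
  define h where "h = (\<lambda>x. f x - g x)"
  define y where "y = (\<lambda>(t::complex) r. x r + t * of_nat r)"
  have separated: "\<forall>\<^sub>F t in at 0. y t r \<noteq> y t s" if "r \<noteq> s" for r s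
  proof (rule eventually_mono[OF eventually_neq_at_within])
    fix t
    assume t: "t \<noteq> (x s - x r) / (of_nat r - of_nat s)"
    show "y t r \<noteq> y t s"
    proof
      assume "y t r = y t s"
      then have "t * (of_nat r - of_nat s) = x s - x r"
        by (simp add: y_def algebra_simps)
      with t \<open>r \<noteq> s\<close> show False
        by (simp add: eq_divide_eq)
    qed
  qed
  have "\<forall>\<^sub>F t in at 0. r \<noteq> s \<longrightarrow> y t r \<noteq> y t s" for r s
    using separated[of r s] by (cases "r = s") simp_all
  then have "\<forall>\<^sub>F t in at 0. \<forall>r\<in>{..<n}. \<forall>s\<in>{..<n}. r \<noteq> s \<longrightarrow> y t r \<noteq> y t s"
    by (intro eventually_ball_finite ballI) simp_all
  then have "\<forall>\<^sub>F t in at 0. inj_on (y t) {..<n}"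
    by (rule eventually_mono) (unfold inj_on_def, blast)
  then have "\<forall>\<^sub>F t in at 0. h (y t) = 0"
    by (rule eventually_mono) (simp add: h_def assms(3))
  then have "((\<lambda>t. h (y t)) \<longlongrightarrow> 0) (at 0)"
    by (rule tendsto_eventually)
  moreover have "poly_fun n h"
    unfolding h_def using assms(1,2) by (rule poly_fun_diff)
  then have "((\<lambda>t. h (y t)) \<longlongrightarrow> h (y 0)) (at 0)"
    unfolding y_def by (rule isCont_poly_fun_line[unfolded isCont_def])
  ultimately have "h (y 0) = 0"
    by (rule tendsto_unique[OF at_neq_bot, symmetric])
  then show "f x = g x"
    by (simp add: h_def y_def)
qed

lemma P_eq_coeff_newton_interp:
  assumes "1 \<le> j" "j \<le> n"
  shows "P n j m = (\<lambda>x. coeff (newton_interp n m x) (j - 1))"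
  unfolding P_def
proof (rule the_equality)
  show "poly_fun n (\<lambda>x. coeff (newton_interp n m x) (j - 1)) \<and>
      (\<forall>x. coeff (newton_interp n m x) (j - 1) * det (vandermonde n x) = det (vandermonde_repl n j m x))"
    using det_vandermonde_repl[OF assms] poly_fun_coeff_newton_interp by simp
next
  fix f
  assume f: "poly_fun n f \<and> (\<forall>x. f x * det (vandermonde n x) = det (vandermonde_repl n j m x))"
  show "f = (\<lambda>x. coeff (newton_interp n m x) (j - 1))"
  proof (rule poly_fun_eq_if_eq_on_injective)
    show "poly_fun n f"
      using f ..
    show "poly_fun n (\<lambda>x. coeff (newton_interp n m x) (j - 1))"
      by (rule poly_fun_coeff_newton_interp)
    show "f z = coeff (newton_interp n m z) (j - 1)" if "inj_on z {..<n}" for z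
    proof -
      have "f z * det (vandermonde n z) = coeff (newton_interp n m z) (j - 1) * det (vandermonde n z)"
        using f det_vandermonde_repl[OF assms] by simp
      then show ?thesis
        using det_vandermonde_nonzero[OF that] by simp
    qed
  qed
qed

lemma norm_complete_sym_le:
  "0 \<le> a \<Longrightarrow> (\<forall>r<k. cmod (x r) \<le> a) \<Longrightarrow> cmod (complete_sym k d x) \<le> (real d + 1) ^ k * a ^ d"
proof (induction k d x rule: complete_sym.induct)
  case (3 k d x)
  have "cmod (complete_sym (Suc k) (Suc d) x)
      \<le> cmod (complete_sym k (Suc d) x) + cmod (x k) * cmod (complete_sym (Suc k) d x)"
    by (simp add: norm_triangle_ineq[THEN order_trans] norm_mult)
  also have "\<dots> \<le> (real (Suc d) + 1) ^ k * a ^ Suc d + a * ((real d + 1) ^ Suc k * a ^ d)"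
    using 3 by (intro add_mono mult_mono) auto
  also have "\<dots> \<le> (real (Suc d) + 1) ^ k * a ^ Suc d + (real d + 1) * (real (Suc d) + 1) ^ k * a ^ Suc d"
    using \<open>0 \<le> a\<close> by (intro add_left_mono) (simp add: mult_ac mult_left_mono mult_right_mono power_mono)
  also have "\<dots> = (real (Suc d) + 1) ^ Suc k * a ^ Suc d"
    by (simp add: algebra_simps)
  finally show ?case .
qed auto

lemma norm_coeff_node_poly_le:
  "0 \<le> a \<Longrightarrow> (\<forall>r<k. cmod (x r) \<le> a) \<Longrightarrow> cmod (coeff (node_poly k x) c) \<le> (1 + a) ^ k"
proof (induction k arbitrary: c)
  case 0
  then show ?case
    by simp
next
  case (Suc k)
  have IH: "cmod (coeff (node_poly k x) c') \<le> (1 + a) ^ k" for c'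
    using Suc by simp
  have "cmod (coeff (node_poly (Suc k) x) c)
      \<le> cmod (x k) * cmod (coeff (node_poly k x) c)
        + cmod (case c of 0 \<Rightarrow> 0 | Suc c' \<Rightarrow> coeff (node_poly k x) c')"
    unfolding coeff_node_poly_Suc by (metis norm_minus_cancel norm_mult norm_triangle_ineq mult_minus_left)
  also have "\<dots> \<le> a * (1 + a) ^ k + (1 + a) ^ k"
    using Suc.prems IH by (intro add_mono mult_mono) (auto split: nat.split)
  finally show ?case
    by (simp add: algebra_simps)
qed

lemma norm_coeff_newton_interp_le:
  assumes "0 < a" and "\<forall>r<n. cmod (x r) \<le> a"
  shows "cmod (coeff (newton_interp n m x) c) \<le> real n * ((1 + a) / a) ^ n * ((real m + 1) ^ n * a ^ m)"
proof -
  define K where "K = ((1 + a) / a) ^ n * ((real m + 1) ^ n * a ^ m)"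
  have "cmod ((if i \<le> m then complete_sym (Suc i) (m - i) x else 0) * coeff (node_poly i x) c) \<le> K"
    if "i < n" for i
  proof (cases "i \<le> m")
    case False
    then show ?thesis
      using \<open>0 < a\<close> by (simp add: K_def)
  next
    case True
    have "cmod (complete_sym (Suc i) (m - i) x * coeff (node_poly i x) c)
        \<le> ((real (m - i) + 1) ^ Suc i * a ^ (m - i)) * (1 + a) ^ i"
      unfolding norm_mult using assms \<open>i < n\<close>
      by (intro mult_mono norm_complete_sym_le norm_coeff_node_poly_le) auto
    also have "\<dots> \<le> (real m + 1) ^ n * (a ^ (m - i) * (1 + a) ^ i)"
    proof -
      have "(real (m - i) + 1) ^ Suc i \<le> (real m + 1) ^ Suc i"
        by (intro power_mono) auto
      also have "\<dots> \<le> (real m + 1) ^ n"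
        using \<open>i < n\<close> by (intro power_increasing) auto
      finally show ?thesis
        using \<open>0 < a\<close> by (simp only: mult.assoc[symmetric]) (intro mult_right_mono, auto)
    qed
    also have "a ^ (m - i) * (1 + a) ^ i = a ^ m * ((1 + a) / a) ^ i"
      using True \<open>0 < a\<close> by (simp add: power_divide field_simps flip: power_add)
    also have "(real m + 1) ^ n * (a ^ m * ((1 + a) / a) ^ i)
        \<le> (real m + 1) ^ n * (a ^ m * ((1 + a) / a) ^ n)"
      using \<open>i < n\<close> \<open>0 < a\<close>
      by (intro mult_left_mono power_increasing) (auto simp: field_simps)
    also have "\<dots> = K"
      by (simp add: K_def mult_ac)
    finally show ?thesis
      using True by simp
  qed
  then have "(\<Sum>i<n. cmod ((if i \<le> m then complete_sym (Suc i) (m - i) x else 0)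
      * coeff (node_poly i x) c)) \<le> real n * K"
    using sum_bounded_above[of "{..<n}" _ K] by simp
  then show ?thesis
    unfolding newton_interp_def coeff_sum coeff_smult K_def
    by (auto intro: order.trans[OF norm_sum] simp: mult.assoc)
qed

text \<open>With \<open>s\<^sup>n = a / b\<close>, the sequence \<open>(m + 1)\<^sup>n (a / b)\<^sup>m = ((m + 1) s\<^sup>m)\<^sup>n\<close> tends to \<open>0\<close>.\<close>

lemma polynomial_times_power_bounded:
  assumes "0 < a" and "a < b"
  shows "\<exists>B>0. \<forall>m. (real m + 1) ^ n * a ^ m \<le> B * b ^ m"
proof -
  define q where "q = a / b"
  have q: "0 < q" "q < 1"
    using assms by (auto simp: q_def)
  have "(\<lambda>m. (real m + 1) ^ n * q ^ m) \<longlonglongrightarrow> 0"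
  proof (cases "n = 0")
    case True
    then show ?thesis
      using q by (simp add: LIMSEQ_power_zero)
  next
    case False
    define s where "s = root n q"
    have s: "0 < s" "s < 1" "s ^ n = q"
      using q False by (auto simp: s_def)
    have "(\<lambda>m. real m * s ^ m + s ^ m) \<longlonglongrightarrow> 0 + 0"
      using powser_times_n_limit_0[of s] s by (intro tendsto_add LIMSEQ_power_zero) auto
    then have "(\<lambda>m. (real m * s ^ m + s ^ m) ^ n) \<longlonglongrightarrow> 0"
      using tendsto_power[of _ 0 sequentially n] False by (simp add: zero_power)
    moreover have "(real m * s ^ m + s ^ m) ^ n = (real m + 1) ^ n * q ^ m" for m
    proof -
      have "(real m * s ^ m + s ^ m) ^ n = (real m + 1) ^ n * (s ^ m) ^ n"
        by (simp add: algebra_simps flip: power_mult_distrib)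
      also have "(s ^ m) ^ n = q ^ m"
        by (simp flip: s(3) power_mult add: mult.commute)
      finally show ?thesis .
    qed
    ultimately show ?thesis
      by simp
  qed
  then have "Bseq (\<lambda>m. (real m + 1) ^ n * q ^ m)"
    by (intro convergent_imp_Bseq convergentI)
  then obtain B where "B > 0" and B: "\<And>m. norm ((real m + 1) ^ n * q ^ m) \<le> B"
    by (auto elim: BseqE)
  have "(real m + 1) ^ n * a ^ m \<le> B * b ^ m" for m
  proof -
    have "(real m + 1) ^ n * q ^ m * b ^ m \<le> B * b ^ m"
      using B[of m] q assms by (intro mult_right_mono) auto
    moreover have "q ^ m * b ^ m = a ^ m"
      using assms by (simp add: q_def power_divide)
    ultimately show ?thesis
      by (simp add: mult.assoc)
  qed
  with \<open>B > 0\<close> show ?thesis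
    by blast
qed

theorem lemma4p3:
  fixes n :: nat and \<alpha> \<beta> :: real
  assumes "0 < \<alpha>" and "\<alpha> < \<beta>"
  shows "\<exists>c > 0. \<forall>m j (x :: nat \<Rightarrow> complex).
           1 \<le> j \<and> j \<le> n \<and> (\<forall>r < n. cmod (x r) \<le> \<alpha>) \<longrightarrow>
           cmod (P n j m x) \<le> c * \<beta> ^ m"
proof -
  obtain B where "B > 0" and B: "\<And>m. (real m + 1) ^ n * \<alpha> ^ m \<le> B * \<beta> ^ m"
    using polynomial_times_power_bounded[OF assms] by blast
  define K where "K = real n * ((1 + \<alpha>) / \<alpha>) ^ n"
  have "K \<ge> 0"
    using \<open>0 < \<alpha>\<close> by (simp add: K_def)
  have "cmod (P n j m x) \<le> (K * B + 1) * \<beta> ^ m"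
    if "1 \<le> j" "j \<le> n" "\<forall>r<n. cmod (x r) \<le> \<alpha>" for m j x
  proof -
    have "cmod (P n j m x) \<le> K * ((real m + 1) ^ n * \<alpha> ^ m)"
      using that \<open>0 < \<alpha>\<close> norm_coeff_newton_interp_le
      by (simp add: P_eq_coeff_newton_interp K_def)
    also have "\<dots> \<le> K * (B * \<beta> ^ m)"
      using B \<open>K \<ge> 0\<close> by (rule mult_left_mono)
    also have "\<dots> \<le> (K * B + 1) * \<beta> ^ m"
      using assms by (simp add: algebra_simps)
    finally show ?thesis .
  qed
  moreover have "K * B + 1 > 0"
    using \<open>K \<ge> 0\<close> \<open>B > 0\<close> by (simp add: add_nonneg_pos)
  ultimately show ?thesis
    by blast
qed

end
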